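(* Let $J=JCK(Z,\delta)$. The restriction map $\mathrm{Der}(J)_{\bar0}\to\mathrm{Der}(J_{\bar0})$, $\partial\mapsto\partial|_{J_{\bar0}}$, is injective.
   Context: Let $\mathbb F$ be a field of characteristic $\neq 2$, $Z$ a unital commutative associative $\mathbb F$-algebra, and $\delta$ a derivation of $Z$ such that $Z\delta(Z)=Z$ (the $\mathbb F$-span of all products $f\delta(g)$, $f,g\in Z$, is $Z$). The Cheng-Kac Jordan superalgebra $J=JCK(Z,\delta)=J_{\bar0}\oplus J_{\bar1}$ is defined as follows: $J_{\bar0}=Z1\oplus Zw_1\oplus Zw_2\oplus Zw_3$ and $J_{\bar1}=Zx\oplus Zx_1\oplus Zx_2\oplus Zx_3$ are free $Z$-modules of rank 4; $J_{\bar0}$ is the $Z$-algebra $(\mathbb F1\oplus\mathbb Fw_1\oplus\mathbb Fw_2\oplus\mathbb Fw_3)\otimes_{\mathbb F}Z$ with $1$ the identity, $w_1^2=w_2^2=1$, $w_3^2=-1$, $w_iw_j=0$ for $i\ne j$. For $f,g\in Z$ and $i,j\in\{1,2,3\}$ the remaining products are: $f(gx)=(fg)x$, $f(gx_j)=(fg)x_j$, $(fw_i)(gx)=(\delta(f)g)x_i$, $(fw_i)(gx_j)=-(fg)x_{i\times j}$, $(fx)(gx)=\delta(f)g-f\delta(g)$, $(fx)(gx_j)=-(fg)w_j$, $(fx_i)(gx)=(fg)w_i$, $(fx_i)(gx_j)=0$, extended by supercommutativity ($ab=(-1)^{|a||b|}ba$), where $x_{1\times2}=-x_{2\times1}=x_3$,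 $x_{1\times3}=-x_{3\times1}=x_2$, $x_{3\times2}=-x_{2\times3}=x_1$, $x_{i\times i}=0$. Derivations are super derivations: homogeneous linear $d$ with $d(ab)=d(a)b+(-1)^{|d||a|}ad(b)$. *)

theory Defs
  imports Main "HOL.Modules" "HOL-Library.FuncSet"
begin

text \<open>Z is a type of class comm_ring_1 (unital, commutative, associative);
  the F-algebra structure is a scalar multiplication sc making Z an F-module
  that is compatible with the ring multiplication.\<close>

definition is_F_algebra :: "('f::field \<Rightarrow> 'z::comm_ring_1 \<Rightarrow> 'z) \<Rightarrow> bool" where
  "is_F_algebra sc \<longleftrightarrow> module sc \<and> (\<forall>a x y. sc a (x * y) = sc a x * y)"

definition is_derivation :: "('f::field \<Rightarrow> 'z::comm_ring_1 \<Rightarrow> 'z) \<Rightarrow> ('z \<Rightarrow> 'z) \<Rightarrow> bool" where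
  "is_derivation sc \<delta> \<longleftrightarrow>
     (\<forall>x y. \<delta> (x + y) = \<delta> x + \<delta> y) \<and> (\<forall>a x. \<delta> (sc a x) = sc a (\<delta> x)) \<and>
     (\<forall>x y. \<delta> (x * y) = \<delta> x * y + x * \<delta> y)"

text \<open>Z\<delta>(Z) = Z: every element of Z is an F-linear combination of products f \<delta>(g).\<close>
definition span_cond :: "('f::field \<Rightarrow> 'z::comm_ring_1 \<Rightarrow> 'z) \<Rightarrow> ('z \<Rightarrow> 'z) \<Rightarrow> bool" where
  "span_cond sc \<delta> \<longleftrightarrow>
     (\<forall>z. \<exists>n c f g. z = (\<Sum>i<(n::nat). sc (c i) (f i * \<delta> (g i))))"

datatype idx = I1 | I2 | I3

text \<open>Basis of J over Z: One = 1, W i = w_i (even); X = x, Xs i = x_i (odd).\<close>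
datatype cb = One | W idx | X | Xs idx

definition cb_all :: "cb set" where
  "cb_all = {One, W I1, W I2, W I3, X, Xs I1, Xs I2, Xs I3}"

fun cb_odd :: "cb \<Rightarrow> bool" where
  "cb_odd One = False" | "cb_odd (W _) = False" | "cb_odd X = True" | "cb_odd (Xs _) = True"

text \<open>An element of J is its coordinate vector with respect to the Z-basis.\<close>
type_synonym 'z jck = "cb \<Rightarrow> 'z"

definition single :: "cb \<Rightarrow> 'z::comm_ring_1 \<Rightarrow> 'z jck" where
  "single b z = (\<lambda>c. if c = b then z else 0)"

text \<open>cross_coeff i j k = coefficient of x_k in x_{i \<times> j}.\<close>
fun cross_coeff :: "idx \<Rightarrow> idx \<Rightarrow> idx \<Rightarrow> int" where
  "cross_coeff I1 I2 I3 = 1"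
| "cross_coeff I2 I1 I3 = -1"
| "cross_coeff I1 I3 I2 = 1"
| "cross_coeff I3 I1 I2 = -1"
| "cross_coeff I3 I2 I1 = 1"
| "cross_coeff I2 I3 I1 = -1"
| "cross_coeff _ _ _ = 0"

definition cross_vec :: "idx \<Rightarrow> idx \<Rightarrow> 'z::comm_ring_1 \<Rightarrow> 'z jck" where
  "cross_vec i j z = (\<lambda>c. case c of Xs k \<Rightarrow> of_int (cross_coeff i j k) * z | _ \<Rightarrow> 0)"

fun wsq :: "idx \<Rightarrow> int" where
  "wsq I1 = 1" | "wsq I2 = 1" | "wsq I3 = -1"

text \<open>bprod \<delta> p f q g = the product (f b_p)(g b_q) of Z-multiples of basis elements.\<close>
fun bprod :: "('z::comm_ring_1 \<Rightarrow> 'z) \<Rightarrow> cb \<Rightarrow> 'z \<Rightarrow> cb \<Rightarrow> 'z \<Rightarrow> 'z jck" where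
  "bprod \<delta> One f q g = single q (f * g)"
| "bprod \<delta> (W i) f One g = single (W i) (f * g)"
| "bprod \<delta> X f One g = single X (f * g)"
| "bprod \<delta> (Xs i) f One g = single (Xs i) (f * g)"
| "bprod \<delta> (W i) f (W j) g = (if i = j then single One (of_int (wsq i) * (f * g)) else (\<lambda>_. 0))"
| "bprod \<delta> (W i) f X g = single (Xs i) (\<delta> f * g)"
| "bprod \<delta> X f (W i) g = single (Xs i) (\<delta> g * f)"
| "bprod \<delta> (W i) f (Xs j) g = cross_vec i j (- (f * g))"
| "bprod \<delta> (Xs j) f (W i) g = cross_vec i j (- (g * f))"
| "bprod \<delta> X f X g = single One (\<delta> f * g - f * \<delta> g)"
| "bprod \<delta> X f (Xs j) g = single (W j) (- (f * g))"
| "bprod \<delta> (Xs i) f X g = single (W i) (f * g)"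
| "bprod \<delta> (Xs i) f (Xs j) g = (\<lambda>_. 0)"

definition jck_mult :: "('z::comm_ring_1 \<Rightarrow> 'z) \<Rightarrow> 'z jck \<Rightarrow> 'z jck \<Rightarrow> 'z jck" where
  "jck_mult \<delta> u v = (\<lambda>c. \<Sum>p\<in>cb_all. \<Sum>q\<in>cb_all. bprod \<delta> p (u p) q (v q) c)"

definition jck_scale :: "('f \<Rightarrow> 'z \<Rightarrow> 'z) \<Rightarrow> 'f \<Rightarrow> 'z jck \<Rightarrow> 'z jck" where
  "jck_scale sc a u = (\<lambda>c. sc a (u c))"

definition jck_add :: "'z::comm_ring_1 jck \<Rightarrow> 'z jck \<Rightarrow> 'z jck" where
  "jck_add u v = (\<lambda>c. u c + v c)"

definition J_even :: "'z::comm_ring_1 jck set" where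
  "J_even = {u. \<forall>c. cb_odd c \<longrightarrow> u c = 0}"

definition J_odd :: "'z::comm_ring_1 jck set" where
  "J_odd = {u. \<forall>c. \<not> cb_odd c \<longrightarrow> u c = 0}"

text \<open>Even (degree 0) superderivations of J: F-linear maps preserving J_0 and J_1
  and satisfying d(ab) = d(a)b + a d(b).  These form Der(J)_0.\<close>
definition even_der :: "('f::field \<Rightarrow> 'z::comm_ring_1 \<Rightarrow> 'z) \<Rightarrow> ('z \<Rightarrow> 'z)
    \<Rightarrow> ('z jck \<Rightarrow> 'z jck) \<Rightarrow> bool" where
  "even_der sc \<delta> d \<longleftrightarrow>
     (\<forall>u v. d (jck_add u v) = jck_add (d u) (d v)) \<and>
     (\<forall>a u. d (jck_scale sc a u) = jck_scale sc a (d u)) \<and>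
     d ` J_even \<subseteq> J_even \<and> d ` J_odd \<subseteq> J_odd \<and>
     (\<forall>u v. d (jck_mult \<delta> u v) = jck_add (jck_mult \<delta> (d u) v) (jck_mult \<delta> u (d v)))"

end

theory Submission
  imports Defs
begin

(* Since the restriction map is additive, it suffices to show: an additive map D
   on J satisfying the Leibniz rule, preserving J_1 and vanishing on J_0, vanishes
   identically (apply this to the difference of two even derivations with the same
   restriction).
   As D kills the even elements, it commutes with left multiplication by them, so
   D is Z-linear and determined by D(x), D(x_1), D(x_2), D(x_3) \<in> J_1.  The
   relations x x_j \<in> J_0 and w_i x_j = -x_{i\<times>j} express D(x_j) through the
   x-coordinate a of D(x), and w_i f \<cdot> x = \<delta>(f) x_i then forces 2a\<delta>(f) = 0 for all f
   and kills the remaining coordinates of D(x).  Finally, Z\<delta>(Z) = Z and char F \<noteq> 2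
   show that 2a\<delta>(Z) = 0 implies a = 0. *)

lemma sum_cb_all:
  "sum f cb_all = f One + f (W I1) + f (W I2) + f (W I3) + f X + f (Xs I1) + f (Xs I2) + f (Xs I3)"
  by (simp add: cb_all_def algebra_simps)

lemma mult_One:
  "jck_mult \<delta> u v One = u One * v One + u (W I1) * v (W I1) + u (W I2) * v (W I2)
     - u (W I3) * v (W I3) + (\<delta> (u X) * v X - u X * \<delta> (v X))"
  by (simp add: jck_mult_def sum_cb_all single_def cross_vec_def)

lemma mult_W:
  "jck_mult \<delta> u v (W k) = u One * v (W k) + u (W k) * v One - u X * v (Xs k) + u (Xs k) * v X"
  by (cases k; simp add: jck_mult_def sum_cb_all single_def cross_vec_def)

lemma mult_X: "jck_mult \<delta> u v X = u One * v X + u X * v One"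
  by (simp add: jck_mult_def sum_cb_all single_def cross_vec_def)

lemma mult_Xs1:
  "jck_mult \<delta> u v (Xs I1) = u One * v (Xs I1) + u (Xs I1) * v One + \<delta> (u (W I1)) * v X
     + \<delta> (v (W I1)) * u X - u (W I3) * v (Xs I2) + u (W I2) * v (Xs I3)
     - v (W I3) * u (Xs I2) + v (W I2) * u (Xs I3)"
  by (simp add: jck_mult_def sum_cb_all single_def cross_vec_def)

lemma mult_Xs2:
  "jck_mult \<delta> u v (Xs I2) = u One * v (Xs I2) + u (Xs I2) * v One + \<delta> (u (W I2)) * v X
     + \<delta> (v (W I2)) * u X - u (W I1) * v (Xs I3) + u (W I3) * v (Xs I1)
     - v (W I1) * u (Xs I3) + v (W I3) * u (Xs I1)"
  by (simp add: jck_mult_def sum_cb_all single_def cross_vec_def)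

lemma mult_Xs3:
  "jck_mult \<delta> u v (Xs I3) = u One * v (Xs I3) + u (Xs I3) * v One + \<delta> (u (W I3)) * v X
     + \<delta> (v (W I3)) * u X - u (W I1) * v (Xs I2) + u (W I2) * v (Xs I1)
     - v (W I1) * u (Xs I2) + v (W I2) * u (Xs I1)"
  by (simp add: jck_mult_def sum_cb_all single_def cross_vec_def)

lemmas mult_coords = mult_One mult_W mult_X mult_Xs1 mult_Xs2 mult_Xs3

lemma single_apply: "single b z c = (if c = b then z else 0)"
  by (simp add: single_def)

lemma cb_cases:
  obtains "c = One" | "c = W I1" | "c = W I2" | "c = W I3"
        | "c = X" | "c = Xs I1" | "c = Xs I2" | "c = Xs I3"
proof (cases c)
  case (W i) thus ?thesis using that by (cases i) simp_all
next
  case (Xs i) thus ?thesis using that by (cases i) simp_all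
qed (use that in simp_all)

lemma jck_ext:
  assumes "f One = g One" "f (W I1) = g (W I1)" "f (W I2) = g (W I2)" "f (W I3) = g (W I3)"
    "f X = g X" "f (Xs I1) = g (Xs I1)" "f (Xs I2) = g (Xs I2)" "f (Xs I3) = g (Xs I3)"
  shows "f = g"
proof
  fix c show "f c = g c" by (cases c rule: cb_cases) (use assms in auto)
qed

lemma mult_zero_left: "\<delta> 0 = 0 \<Longrightarrow> jck_mult \<delta> (\<lambda>_. 0) v = (\<lambda>_. 0)"
  by (rule jck_ext; simp add: mult_coords)

lemma mult_single_One: "\<delta> 0 = 0 \<Longrightarrow> jck_mult \<delta> (single One g) v = (\<lambda>c. g * v c)"
  by (rule jck_ext; simp add: mult_coords single_def)

lemma bprod_diff_left:
  assumes "\<And>x y. \<delta> (x - y) = \<delta> x - \<delta> y"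
  shows "bprod \<delta> p (f - f') q g c = bprod \<delta> p f q g c - bprod \<delta> p f' q g c"
  by (cases p; cases q; simp add: single_def cross_vec_def assms algebra_simps split: cb.split)

lemma bprod_diff_right:
  assumes "\<And>x y. \<delta> (x - y) = \<delta> x - \<delta> y"
  shows "bprod \<delta> p g q (f - f') c = bprod \<delta> p g q f c - bprod \<delta> p g q f' c"
  by (cases p; cases q; simp add: single_def cross_vec_def assms algebra_simps split: cb.split)

lemma mult_diff_left:
  assumes "\<And>x y. \<delta> (x - y) = \<delta> x - \<delta> y"
  shows "jck_mult \<delta> (\<lambda>c. p c - q c) v = (\<lambda>c. jck_mult \<delta> p v c - jck_mult \<delta> q v c)"
  unfolding jck_mult_def by (simp add: bprod_diff_left[OF assms] sum_subtractf)

lemma mult_diff_right: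
  assumes "\<And>x y. \<delta> (x - y) = \<delta> x - \<delta> y"
  shows "jck_mult \<delta> v (\<lambda>c. p c - q c) = (\<lambda>c. jck_mult \<delta> v p c - jck_mult \<delta> v q c)"
  unfolding jck_mult_def by (simp add: bprod_diff_right[OF assms] sum_subtractf)

lemma even_odd_split:
  "u = jck_add (\<lambda>c. if cb_odd c then 0 else u c) (\<lambda>c. if cb_odd c then u c else 0)"
  "(\<lambda>c. if cb_odd c then 0 else u c) \<in> J_even"
  "(\<lambda>c. if cb_odd c then u c else 0) \<in> J_odd"
  by (simp_all add: jck_add_def J_even_def J_odd_def fun_eq_iff)

lemma odd_split:
  assumes "u \<in> J_odd"
  shows "u = jck_add (single X (u X)) (jck_add (single (Xs I1) (u (Xs I1)))
               (jck_add (single (Xs I2) (u (Xs I2))) (single (Xs I3) (u (Xs I3)))))"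
  using assms by (intro jck_ext; simp add: J_odd_def jck_add_def single_def)

lemma derivation_basics:
  assumes "is_derivation sc \<delta>"
  shows "\<delta> 0 = 0" "\<delta> 1 = 0" "\<And>x y. \<delta> (x - y) = \<delta> x - \<delta> y"
proof -
  have add: "\<And>x y. \<delta> (x + y) = \<delta> x + \<delta> y" and mul: "\<And>x y. \<delta> (x * y) = \<delta> x * y + x * \<delta> y"
    using assms by (auto simp: is_derivation_def)
  show "\<delta> 0 = 0" using add[of 0 0] by simp
  show "\<delta> 1 = 0" using mul[of 1 1] by simp
  show "\<delta> (x - y) = \<delta> x - \<delta> y" for x y using add[of "x - y" y] by (simp add: algebra_simps)
qed

text \<open>Since 1 \<in> Z\<delta>(Z), an element annihilating \<delta>(Z) is zero.\<close>
lemma annihilator_of_delta_image: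
  fixes sc :: "'f::field \<Rightarrow> 'z::comm_ring_1 \<Rightarrow> 'z"
  assumes alg: "is_F_algebra sc" and span: "span_cond sc \<delta>"
    and ann: "\<And>f. b * \<delta> f = 0"
  shows "b = 0"
proof -
  have mod: "module sc" and scm: "\<And>a x y. sc a (x * y) = sc a x * y"
    using alg by (auto simp: is_F_algebra_def)
  obtain n c f g where one: "(1::'z) = (\<Sum>i<(n::nat). sc (c i) (f i * \<delta> (g i)))"
    using span unfolding span_cond_def by blast
  have "b = b * (\<Sum>i<n. sc (c i) (f i * \<delta> (g i)))" by (simp flip: one)
  also have "\<dots> = (\<Sum>i<n. sc (c i) (f i * (b * \<delta> (g i))))"
    unfolding sum_distrib_left by (rule sum.cong[OF refl]) (metis scm mult.left_commute)
  also have "\<dots> = 0"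
    by (simp add: ann module.scale_zero_right[OF mod])
  finally show ?thesis .
qed

lemma no_two_torsion:
  fixes sc :: "'f::field \<Rightarrow> 'z::comm_ring_1 \<Rightarrow> 'z" and a :: 'z
  assumes two: "(2::'f) \<noteq> 0" and mod: "module sc"
    and aa: "a + a = 0"
  shows "a = 0"
proof -
  have "a = sc 1 a" using module.scale_one[OF mod] by simp
  also have "(1::'f) = 1/2 + 1/2" using two by (simp add: field_simps)
  also have "sc (1/2 + 1/2) a = sc (1/2) a + sc (1/2) a"
    by (rule module.scale_left_distrib[OF mod])
  also have "\<dots> = sc (1/2) (a + a)"
    by (rule module.scale_right_distrib[OF mod, symmetric])
  also have "\<dots> = 0" using aa module.scale_zero_right[OF mod] by simp
  finally show ?thesis .
qed

text \<open>An additive map satisfying the Leibniz rule that preserves J_1 and kills J_0;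
  the difference of two even derivations agreeing on J_0 is of this kind.\<close>
locale even_vanishing_derivation =
  fixes \<delta> :: "'z::comm_ring_1 \<Rightarrow> 'z" and D :: "'z jck \<Rightarrow> 'z jck"
  assumes delta_0: "\<delta> 0 = 0" and delta_1: "\<delta> 1 = 0"
    and D_add: "\<And>u v. D (jck_add u v) = jck_add (D u) (D v)"
    and D_mult: "\<And>u v. D (jck_mult \<delta> u v) = jck_add (jck_mult \<delta> (D u) v) (jck_mult \<delta> u (D v))"
    and D_odd: "\<And>u. u \<in> J_odd \<Longrightarrow> D u \<in> J_odd"
    and D_even: "\<And>u. u \<in> J_even \<Longrightarrow> D u = (\<lambda>_. 0)"
begin

lemma D_mult_even_left: "u \<in> J_even \<Longrightarrow> D (jck_mult \<delta> u v) = jck_mult \<delta> u (D v)"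
  by (simp add: D_mult D_even mult_zero_left delta_0 jck_add_def)

lemma D_single_scale: "D (single b g) = (\<lambda>c. g * D (single b 1) c)"
proof -
  have factor: "single b g = jck_mult \<delta> (single One g) (single b 1)"
    by (subst mult_single_One[of \<delta>, OF delta_0]) (simp add: single_def fun_eq_iff)
  have "single One g \<in> J_even" by (simp add: J_even_def single_def)
  then have "D (jck_mult \<delta> (single One g) (single b 1)) = jck_mult \<delta> (single One g) (D (single b 1))"
    by (rule D_mult_even_left)
  then show ?thesis by (simp flip: factor add: mult_single_One delta_0)
qed

lemma D_single_odd_coord: "cb_odd b \<Longrightarrow> \<not> cb_odd c \<Longrightarrow> D (single b g) c = 0"
  using D_odd[of "single b g"] by (simp add: J_odd_def single_def)

lemmas coord_simps = mult_coords single_apply delta_0 delta_1 D_single_odd_coord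

text \<open>From x x_j \<in> J_0: the x_k-coordinate of D(x_j) is -a for k = j and 0 otherwise,
  where a is the x-coordinate of D(x).\<close>
lemma D_xs_Xs: "D (single (Xs j) 1) (Xs k) = (if k = j then - D (single X 1) X else 0)"
proof -
  have "jck_mult \<delta> (single X 1) (single (Xs j) 1) \<in> J_even"
    unfolding J_even_def
  proof (intro CollectI allI impI)
    fix c :: cb assume "cb_odd c"
    then show "jck_mult \<delta> (single X 1) (single (Xs j) 1) c = 0"
      by (cases c rule: cb_cases; cases j; simp add: coord_simps)
  qed
  then have "jck_add (jck_mult \<delta> (D (single X 1)) (single (Xs j) 1))
               (jck_mult \<delta> (single X 1) (D (single (Xs j) 1))) = (\<lambda>_. 0)"
    using D_even D_mult by metis
  from fun_cong[OF this, of "W k"] show ?thesis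
    by (cases j; cases k; simp add: jck_add_def coord_simps)
qed

text \<open>From w_i x_j = -x_k: D(x_k) = -w_i D(x_j), which has zero x-coordinate.\<close>
lemma D_xs_X: "D (single (Xs k) 1) X = 0"
proof -
  have vanish: "D (single (Xs k) 1) X = 0"
    if prod: "jck_mult \<delta> (single (W i) 1) (single (Xs j) 1) = single (Xs k) (-1)" for i j
  proof -
    have "D (single (Xs k) (-1)) = jck_mult \<delta> (single (W i) 1) (D (single (Xs j) 1))"
      by (simp flip: prod, rule D_mult_even_left) (simp add: J_even_def single_def)
    from fun_cong[OF this, of X] show ?thesis
      unfolding D_single_scale[of "Xs k" "-1"] by (simp add: coord_simps)
  qed
  show ?thesis
  proof (cases k)
    case I1 show ?thesis by (rule vanish[of I3 I2]) (rule jck_ext; simp add: coord_simps I1)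
  next
    case I2 show ?thesis by (rule vanish[of I1 I3]) (rule jck_ext; simp add: coord_simps I2)
  next
    case I3 show ?thesis by (rule vanish[of I1 I2]) (rule jck_ext; simp add: coord_simps I3)
  qed
qed

text \<open>From (w_i f) x = \<delta>(f) x_i: \<delta>(f) D(x_i) = (w_i f) D(x).\<close>
lemma D_x_via_xs:
  "(\<lambda>c. \<delta> f * D (single (Xs i) 1) c) = jck_mult \<delta> (single (W i) f) (D (single X 1))"
proof -
  have prod: "jck_mult \<delta> (single (W i) f) (single X 1) = single (Xs i) (\<delta> f)"
    by (cases i; rule jck_ext; simp add: coord_simps)
  have "single (W i) f \<in> J_even" by (simp add: J_even_def single_def)
  then have "D (single (Xs i) (\<delta> f)) = jck_mult \<delta> (single (W i) f) (D (single X 1))"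
    by (simp flip: prod add: D_mult_even_left)
  then show ?thesis unfolding D_single_scale[of "Xs i" "\<delta> f"] .
qed

text \<open>The x_1-coordinate of the previous identity, using the relations for D(x_1).\<close>
lemma D_x_X_doubled: "(D (single X 1) X + D (single X 1) X) * \<delta> f = 0"
  using fun_cong[OF D_x_via_xs[of f I1], of "Xs I1"]
  by (simp add: coord_simps D_xs_Xs algebra_simps)

text \<open>The off-diagonal x_k-coordinates of the same identity (with f = 1, \<delta>(1) = 0).\<close>
lemma D_x_Xs: "D (single X 1) (Xs k) = 0"
  using fun_cong[OF D_x_via_xs[of 1 I1], of "Xs I2"] fun_cong[OF D_x_via_xs[of 1 I1], of "Xs I3"]
    fun_cong[OF D_x_via_xs[of 1 I2], of "Xs I3"]
  by (cases k; simp add: coord_simps D_xs_Xs)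

lemma D_vanishes:
  assumes torsion_free: "\<And>a. (\<And>f. (a + a) * \<delta> f = 0) \<Longrightarrow> a = 0"
  shows "D u = (\<lambda>_. 0)"
proof -
  have a0: "D (single X 1) X = 0"
    using torsion_free D_x_X_doubled by blast
  have odd_basis: "D (single b g) = (\<lambda>_. 0)" if "cb_odd b" for b g
  proof -
    have "D (single b 1) c = 0" for c
      using that D_single_odd_coord[OF that]
      by (cases b; cases c; simp add: a0 D_x_Xs D_xs_X D_xs_Xs)
    then show ?thesis unfolding D_single_scale[of b g] by simp
  qed
  have odd: "D v = (\<lambda>_. 0)" if "v \<in> J_odd" for v
    by (subst odd_split[OF that]) (simp only: D_add odd_basis cb_odd.simps, simp add: jck_add_def)
  show ?thesis
    by (subst even_odd_split(1)) (simp only: D_add D_even odd even_odd_split, simp add: jck_add_def)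
qed

end

lemma even_der_difference:
  assumes der: "is_derivation sc \<delta>"
    and d1: "even_der sc \<delta> d1" and d2: "even_der sc \<delta> d2"
    and agree: "\<And>u. u \<in> J_even \<Longrightarrow> d1 u = d2 u"
  shows "even_vanishing_derivation \<delta> (\<lambda>u c. d1 u c - d2 u c)"
proof
  note \<delta> = derivation_basics[OF der]
  show "\<delta> 0 = 0" "\<delta> 1 = 0" by (fact \<delta>(1), fact \<delta>(2))
  fix u v :: "'b jck"
  show "(\<lambda>c. d1 (jck_add u v) c - d2 (jck_add u v) c)
      = jck_add (\<lambda>c. d1 u c - d2 u c) (\<lambda>c. d1 v c - d2 v c)"
    using d1 d2 by (simp add: even_der_def jck_add_def algebra_simps)
  have "d1 (jck_mult \<delta> u v) = jck_add (jck_mult \<delta> (d1 u) v) (jck_mult \<delta> u (d1 v))"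
    and "d2 (jck_mult \<delta> u v) = jck_add (jck_mult \<delta> (d2 u) v) (jck_mult \<delta> u (d2 v))"
    using d1 d2 by (simp_all add: even_der_def)
  then show "(\<lambda>c. d1 (jck_mult \<delta> u v) c - d2 (jck_mult \<delta> u v) c)
      = jck_add (jck_mult \<delta> (\<lambda>c. d1 u c - d2 u c) v) (jck_mult \<delta> u (\<lambda>c. d1 v c - d2 v c))"
    by (simp add: mult_diff_left mult_diff_right \<delta>(3) jck_add_def fun_eq_iff algebra_simps)
  show "(\<lambda>c. d1 u c - d2 u c) \<in> J_odd" if "u \<in> J_odd"
  proof -
    have "d1 u \<in> J_odd" "d2 u \<in> J_odd"
      using d1 d2 that by (simp_all add: even_der_def image_subset_iff)
    then show ?thesis by (simp add: J_odd_def)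
  qed
  show "(\<lambda>c. d1 u c - d2 u c) = (\<lambda>_. 0)" if "u \<in> J_even"
    using agree[OF that] by simp
qed

theorem mainTheorem3:
  fixes sc :: "'f::field \<Rightarrow> 'z::comm_ring_1 \<Rightarrow> 'z" and \<delta> :: "'z \<Rightarrow> 'z"
  assumes "(2::'f) \<noteq> 0"
    and "is_F_algebra sc"
    and "is_derivation sc \<delta>"
    and "span_cond sc \<delta>"
  shows "inj_on (\<lambda>d. restrict d J_even) {d. even_der sc \<delta> d}"
proof (rule inj_onI)
  fix d1 d2
  assume "d1 \<in> {d. even_der sc \<delta> d}" "d2 \<in> {d. even_der sc \<delta> d}"
    and restr: "restrict d1 J_even = restrict d2 J_even"
  moreover have "d1 u = d2 u" if "u \<in> J_even" for u
    using fun_cong[OF restr, of u] that by simp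
  ultimately have D: "even_vanishing_derivation \<delta> (\<lambda>u c. d1 u c - d2 u c)"
    using assms(3) by (intro even_der_difference) auto
  have "module sc" using assms(2) by (simp add: is_F_algebra_def)
  then have torsion_free: "a = 0" if "\<And>f. (a + a) * \<delta> f = 0" for a :: 'z
    using no_two_torsion[OF assms(1)] annihilator_of_delta_image[OF assms(2,4)] that by blast
  have "(\<lambda>c. d1 u c - d2 u c) = (\<lambda>_. 0)" for u
    using even_vanishing_derivation.D_vanishes[OF D torsion_free] by blast
  then show "d1 = d2" by (simp add: fun_eq_iff)
qed

end
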